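(* Let $0\le p_1<1/2<p_2\le 1$, $p_1'=\tfrac12(p_1+\tfrac12)$, $p_2'=\tfrac12(p_2+\tfrac12)$, and let $\ell$ be a positive integer such that $\log_2(2\ell)$ is an integer, $\ell(1/2-p_1)\ge 2\log_2(2\ell)+1$ and $\ell(p_2-1/2)\ge 2\log_2(2\ell)+1$. Let $\mathbf{x}=\mathbf{x}_1\mathbf{x}_2\in\mathcal{W}(2\ell,\ell,[p_1'\ell,p_2'\ell])$ with $\mathbf{x}_1,\mathbf{x}_2\in\{0,1\}^\ell$. Let $a=\mathrm{Syn}(\mathbf{x}_1)\bmod 2\ell$, let $\mathbf{p}$ be the binary representation of $a$ of length $\log_2(2\ell)$, and let $\mathbf{y}=\mathbf{x}_1(\mathbf{p}\,||\,\overline{\mathbf{p}})\mathbf{x}_2$. Then $\mathbf{y}\in\mathcal{W}(2\ell+2\log_2(2\ell),\ell,[p_1\ell,p_2\ell])$, i.e. every window of size $\ell$ of $\mathbf{y}$ has weight in $[p_1\ell,p_2\ell]$.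
   Context: $\mathrm{wt}(\mathbf{x})$ denotes the number of ones of a binary sequence; $\overline{\mathbf{p}}$ is the bitwise complement; juxtaposition denotes concatenation. For $\mathbf{y}=y_1\dots y_m$, $\mathbf{w}=w_1\dots w_m$, the interleaving is $\mathbf{y}\,||\,\mathbf{w}=y_1w_1\dots y_mw_m$. The VT syndrome of $\mathbf{x}=x_1\dots x_n$ is $\mathrm{Syn}(\mathbf{x})=\sum_{i=1}^n i\,x_i$. For reals $a\le b$ and $\ell\le n$, $\mathcal{W}(n,\ell,[a,b])$ is the set of $\mathbf{x}\in\{0,1\}^n$ all of whose windows $x_i\dots x_{i+\ell-1}$ ($1\le i\le n-\ell+1$) have weight in $[a,b]$. *)

theory Defs
  imports Complex_Main
begin

text \<open>Binary sequences are modelled as lists of booleans (True = 1).\<close>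

definition wt :: "bool list \<Rightarrow> nat" where
  "wt x = length (filter id x)"

definition compl :: "bool list \<Rightarrow> bool list" where
  "compl p = map Not p"

fun interleave :: "bool list \<Rightarrow> bool list \<Rightarrow> bool list" where
  "interleave (y # ys) (w # ws) = y # w # interleave ys ws"
| "interleave _ _ = []"

text \<open>VT syndrome, positions indexed from 1.\<close>
definition Syn :: "bool list \<Rightarrow> nat" where
  "Syn x = (\<Sum>i<length x. (i + 1) * (if x ! i then 1 else 0))"

text \<open>Binary representation of a of length m, most significant bit first.\<close>
definition bin_rep :: "nat \<Rightarrow> nat \<Rightarrow> bool list" where
  "bin_rep m a = map (\<lambda>i. odd (a div 2 ^ (m - 1 - i))) [0..<m]"

definition W :: "nat \<Rightarrow> nat \<Rightarrow> real \<Rightarrow> real \<Rightarrow> bool list set" where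
  "W n l a b = {x. length x = n \<and>
     (\<forall>i. i + l \<le> n \<longrightarrow> a \<le> real (wt (take l (drop i x))) \<and> real (wt (take l (drop i x))) \<le> b)}"

end

theory Submission
  imports Defs
begin

(*
  The inserted word p || ~p pairs every bit with its complement, so each of its prefixes
  has weight within 1/2 of half its length, and the whole word has weight m = log2(2l).
  Hence each length-l window of y differs in weight by at most m from some window of
  x1 x2: from the window at the same offset if it starts in x1 (the part of x2 it no
  longer reaches is traded for a balanced prefix of the inserted word), and from the
  window x2 if it starts inside the inserted word. The hypotheses on l make the margin
  between p_i' l and p_i l exceed m.
*)

lemma wt_append [simp]: "wt (xs @ ys) = wt xs + wt ys"
  by (simp add: wt_def)

lemma wt_le_length: "wt xs \<le> length xs"
  by (simp add: wt_def)

lemma wt_take_mono: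
  assumes "j \<le> k"
  shows "wt (take j xs) \<le> wt (take k xs)" and "wt (take k xs) \<le> wt (take j xs) + (k - j)"
proof -
  have split: "take k xs = take j xs @ take (k - j) (drop j xs)"
    using assms by (metis le_add_diff_inverse take_add)
  then show "wt (take j xs) \<le> wt (take k xs)" by simp
  show "wt (take k xs) \<le> wt (take j xs) + (k - j)"
    using split wt_le_length[of "take (k - j) (drop j xs)"] by simp
qed

lemma wt_take_drop: "wt (take k xs) + wt (drop k xs) = wt xs"
  by (metis append_take_drop_id wt_append)

definition balanced :: "bool list \<Rightarrow> bool" where
  "balanced z \<longleftrightarrow> (\<forall>j \<le> length z. j \<le> 2 * wt (take j z) + 1 \<and> 2 * wt (take j z) \<le> j + 1)"

lemma balanced_take:
  assumes "balanced z"
  shows "min j (length z) \<le> 2 * wt (take j z) + 1" and "2 * wt (take j z) \<le> min j (length z) + 1"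
proof -
  have "take j z = take (min j (length z)) z" by (simp add: min_def)
  then show "min j (length z) \<le> 2 * wt (take j z) + 1" and "2 * wt (take j z) \<le> min j (length z) + 1"
    using assms unfolding balanced_def by (metis min.cobounded2)+
qed

lemma balanced_wt:
  assumes "balanced z" "length z = 2 * m"
  shows "wt z = m"
  using balanced_take[OF assms(1), of "2 * m"] assms(2) by simp

lemma length_interleave_compl [simp]: "length (interleave p (compl p)) = 2 * length p"
  by (induction p) (auto simp: compl_def)

lemma balanced_interleave_compl: "balanced (interleave p (compl p))"
  unfolding balanced_def length_interleave_compl
proof (induction p)
  case Nil
  then show ?case by (simp add: wt_def)
next
  case (Cons a p)
  show ?case
  proof (intro allI impI)
    fix j assume j_le: "j \<le> 2 * length (a # p)"
    let ?w = "\<lambda>j q. wt (take j (interleave q (compl q)))"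
    show "j \<le> 2 * ?w j (a # p) + 1 \<and> 2 * ?w j (a # p) \<le> j + 1"
    proof (cases "j \<le> 1")
      case True
      then show ?thesis by (cases j) (auto simp: wt_def compl_def)
    next
      case False
      then obtain k where j: "j = Suc (Suc k)"
        using less_imp_Suc_add[of 1 j] by auto
      have "?w j (a # p) = ?w k p + 1"
        by (simp add: j wt_def compl_def)
      then show ?thesis using Cons.IH j j_le by simp
    qed
  qed
qed

lemma window_wt_insert_balanced:
  assumes lx1: "length x1 = l" and lx2: "length x2 = l"
    and bal: "balanced z" and lz: "length z = 2 * m" and ml: "2 * m \<le> l"
    and i: "i + l \<le> 2 * l + 2 * m"
  obtains i' where "i' \<le> l"
    and "wt (take l (drop i' (x1 @ x2))) \<le> wt (take l (drop i (x1 @ z @ x2))) + m"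
    and "wt (take l (drop i (x1 @ z @ x2))) \<le> wt (take l (drop i' (x1 @ x2))) + m"
proof (cases "i \<le> l")
  case True
  have y: "take l (drop i (x1 @ z @ x2)) = drop i x1 @ take i z @ take (i - 2 * m) x2"
    using True lx1 lz by simp
  have x: "take l (drop i (x1 @ x2)) = drop i x1 @ take i x2"
    using True lx1 by simp
  have "min i (2 * m) \<le> 2 * wt (take i z) + 1" "2 * wt (take i z) \<le> min i (2 * m) + 1"
    using balanced_take[OF bal, of i] unfolding lz .
  then have z: "wt (take i z) \<le> m" "min i (2 * m) \<le> wt (take i z) + m"
    by linarith+
  have x2: "wt (take (i - 2 * m) x2) \<le> wt (take i x2)"
    "wt (take i x2) \<le> wt (take (i - 2 * m) x2) + min i (2 * m)"
    using wt_take_mono[of "i - 2 * m" i x2] by (auto simp: min_def)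
  show ?thesis
  proof (rule that[of i])
    show "wt (take l (drop i (x1 @ x2))) \<le> wt (take l (drop i (x1 @ z @ x2))) + m"
      unfolding x y wt_append using z x2 by linarith
    show "wt (take l (drop i (x1 @ z @ x2))) \<le> wt (take l (drop i (x1 @ x2))) + m"
      unfolding x y wt_append using z x2 by linarith
  qed (rule True)
next
  case False
  have y: "take l (drop i (x1 @ z @ x2)) = drop (i - l) z @ take (i - 2 * m) x2"
    using False i ml lx1 lz by simp
  have x: "take l (drop l (x1 @ x2)) = x2"
    using lx1 lx2 by simp
  have "2 * wt (take (i - l) z) \<le> min (i - l) (2 * m) + 1"
    using balanced_take(2)[OF bal, of "i - l"] unfolding lz .
  then have z: "wt (take (i - l) z) \<le> i - l" "wt (take (i - l) z) + wt (drop (i - l) z) = m"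
    using False wt_take_drop[of "i - l" z] balanced_wt[OF bal lz] by linarith+
  have "i - 2 * m \<le> l" using i by simp
  from wt_take_mono[OF this, of x2] lx2
  have x2: "wt (take (i - 2 * m) x2) \<le> wt x2"
    "wt x2 \<le> wt (take (i - 2 * m) x2) + (l - (i - 2 * m))"
    by simp_all
  show ?thesis
  proof (rule that[of l])
    show "wt (take l (drop l (x1 @ x2))) \<le> wt (take l (drop i (x1 @ z @ x2))) + m"
      unfolding x y wt_append using False i ml z x2 by linarith
    show "wt (take l (drop i (x1 @ z @ x2))) \<le> wt (take l (drop l (x1 @ x2))) + m"
      unfolding x y wt_append using z x2 by linarith
  qed simp
qed

lemma W_mono: "a' \<le> a \<Longrightarrow> b \<le> b' \<Longrightarrow> W n l a b \<subseteq> W n l a' b'"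
  unfolding W_def by force

lemma insert_balanced_in_W:
  assumes "length x1 = l" "length x2 = l" "x1 @ x2 \<in> W (2 * l) l a b"
    and "balanced z" "length z = 2 * m" "2 * m \<le> l"
  shows "x1 @ z @ x2 \<in> W (2 * l + 2 * m) l (a - real m) (b + real m)"
  unfolding W_def
proof (intro CollectI conjI allI impI)
  show "length (x1 @ z @ x2) = 2 * l + 2 * m" using assms by simp
next
  fix i assume "i + l \<le> 2 * l + 2 * m"
  then obtain i' where "i' \<le> l"
    and "wt (take l (drop i' (x1 @ x2))) \<le> wt (take l (drop i (x1 @ z @ x2))) + m"
    and "wt (take l (drop i (x1 @ z @ x2))) \<le> wt (take l (drop i' (x1 @ x2))) + m"
    by (rule window_wt_insert_balanced[OF assms(1,2,4-6)])
  moreover have "a \<le> real (wt (take l (drop i' (x1 @ x2))))"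
    and "real (wt (take l (drop i' (x1 @ x2)))) \<le> b"
    using assms(3) \<open>i' \<le> l\<close> unfolding W_def by auto
  ultimately show "a - real m \<le> real (wt (take l (drop i (x1 @ z @ x2))))"
    and "real (wt (take l (drop i (x1 @ z @ x2)))) \<le> b + real m"
    by linarith+
qed

theorem corollary3:
  fixes p1 p2 :: real and l :: nat and x1 x2 :: "bool list"
  assumes "0 \<le> p1" and "p1 < 1/2" and "1/2 < p2" and "p2 \<le> 1"
    and "0 < l"
    and "log 2 (2 * real l) \<in> \<int>"
    and "real l * (1/2 - p1) \<ge> 2 * log 2 (2 * real l) + 1"
    and "real l * (p2 - 1/2) \<ge> 2 * log 2 (2 * real l) + 1"
    and "length x1 = l" and "length x2 = l"
    and "x1 @ x2 \<in> W (2 * l) l (((p1 + 1/2) / 2) * real l) (((p2 + 1/2) / 2) * real l)"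
  shows "let m = nat \<lfloor>log 2 (2 * real l)\<rfloor>;
             a = Syn x1 mod (2 * l);
             p = bin_rep m a;
             y = x1 @ interleave p (compl p) @ x2
         in y \<in> W (2 * l + 2 * m) l (p1 * real l) (p2 * real l)"
proof -
  define m where "m = nat \<lfloor>log 2 (2 * real l)\<rfloor>"
  define p where "p = bin_rep m (Syn x1 mod (2 * l))"
  have "log 2 (2 * real l) \<ge> 0" using assms(5) by simp
  then have m: "real m = log 2 (2 * real l)"
    unfolding m_def using of_int_floor[OF assms(6)] by linarith
  have p: "length p = m" by (simp add: p_def bin_rep_def)
  have "real l * (1/2 - p1) \<le> real l / 2" using assms(1) by (simp add: field_simps)
  then have "2 * m \<le> l" using assms(7) m by linarith
  then have "x1 @ interleave p (compl p) @ x2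
      \<in> W (2 * l + 2 * m) l (((p1 + 1/2) / 2) * real l - m) (((p2 + 1/2) / 2) * real l + m)"
    using insert_balanced_in_W[OF assms(9-11) balanced_interleave_compl, of p m] p by simp
  moreover have "p1 * real l \<le> ((p1 + 1/2) / 2) * real l - m"
    and "((p2 + 1/2) / 2) * real l + m \<le> p2 * real l"
    using assms(7,8) m by (simp_all add: field_simps)
  ultimately show ?thesis
    unfolding m_def[symmetric] p_def[symmetric] Let_def using W_mono by blast
qed

end
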